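(* Let $f:\mathbb{R}^n\times\mathbb{R}^m\times\mathbb{N}\to\mathbb{R}^n$ be smooth and suppose that for every $t\ge 0$ there is $L_t>0$ with $\|f(x,d,t)-f(y,d,t)\|\le L_t\|x-y\|$ for all $x,y\in\mathbb{R}^n$, $d\in\mathbb{R}^m$. Let $(w_t)_{t\ge0}$ be independent random vectors in $\mathbb{R}^n$ with $w_t\sim subG(\sigma_t^2)$ for some finite $\sigma_t>0$. Consider the stochastic system $X_{t+1}=f(X_t,d_t,t)+w_t$ and the deterministic system $x_{t+1}=f(x_t,d_t,t)$, and let $X_t$ and $x_t$ be trajectories of these systems with the same initial state $X_0=x_0\in\mathcal{X}_0$ and the same inputs $d_t\in\mathcal{D}$ for $t\le T$, where $T\in\mathbb{N}_+$. For $\delta\in(0,1]$ and $\varepsilon\in(0,1)$ define $$r_{\delta,t}=\sqrt{\Psi_t\big(\varepsilon_1 n+\varepsilon_2\log(T/\delta)\big)},\quad \Psi_t=\psi_{t-1}\sum_{k=0}^{t-1}\sigma_k^2\psi_k^{-1},\quad \psi_t=\prod_{k=0}^{t}L_k^2,$$ $$\varepsilon_1=\frac{2\log(1+2/\varepsilon)}{(1-\varepsilon)^2},\qquad \varepsilon_2=\frac{2}{(1-\varepsilon)^2}$$ (with $\psi_{-1}=1$ and empty sums equal to $0$). Then $$\mathbb{P}\big(\|X_t-x_t\|\le r_{\delta,t}\ \text{for all } t\le T\big)\ge 1-\delta.$$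
   Context: $\|\cdot\|$ is the Euclidean norm and $\langle\cdot,\cdot\rangle$ the standard inner product. A random vector $X\in\mathbb{R}^n$ is sub-Gaussian with variance proxy $\sigma^2$, written $X\sim subG(\sigma^2)$, if $\mathbb{E}(X)=0$ and for every unit vector $\ell\in\mathcal{S}^{n-1}$ and every $\lambda\in\mathbb{R}$, $\mathbb{E}\big(e^{\lambda\langle \ell,X\rangle}\big)\le e^{\lambda^2\sigma^2/2}$. $\mathcal{X}_0\subseteq\mathbb{R}^n$ and $\mathcal{D}\subseteq\mathbb{R}^m$ are arbitrary sets of initial states and inputs. *)

theory Defs
  imports "HOL-Analysis.Analysis" "HOL-Probability.Probability"
begin

fun iter_deriv :: "('a::real_normed_vector \<Rightarrow> 'b::real_normed_vector) \<Rightarrow> 'a list \<Rightarrow> 'a \<Rightarrow> 'b" where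
  "iter_deriv f [] = f"
| "iter_deriv f (v # vs) = (\<lambda>x. frechet_derivative (iter_deriv f vs) (at x) v)"

text \<open>Smooth (C-infinity) map on a finite-dimensional space: all iterated derivatives
  exist everywhere (each is Frechet differentiable, hence continuous).\<close>
definition smooth_map :: "('a::euclidean_space \<Rightarrow> 'b::real_normed_vector) \<Rightarrow> bool" where
  "smooth_map f \<longleftrightarrow> (\<forall>vs x. iter_deriv f vs differentiable (at x))"

definition subG :: "'a measure \<Rightarrow> ('a \<Rightarrow> 'n::euclidean_space) \<Rightarrow> real \<Rightarrow> bool" where
  "subG M X s2 \<longleftrightarrow> integrable M X \<and> (\<integral>\<omega>. X \<omega> \<partial>M) = 0 \<and>
     (\<forall>l::'n. norm l = 1 \<longrightarrow> (\<forall>c::real.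
        (\<integral>\<^sup>+\<omega>. ennreal (exp (c * (l \<bullet> X \<omega>))) \<partial>M) \<le> ennreal (exp (c^2 * s2 / 2))))"

definition psi :: "(nat \<Rightarrow> real) \<Rightarrow> nat \<Rightarrow> real" where
  "psi L t = (\<Prod>k\<le>t. (L k)^2)"

text \<open>Psi L \<sigma> t = psi_{t-1} * sum_{k<t} \<sigma>_k^2 / psi_k, with psi_{-1} = 1.\<close>
definition Psi :: "(nat \<Rightarrow> real) \<Rightarrow> (nat \<Rightarrow> real) \<Rightarrow> nat \<Rightarrow> real" where
  "Psi L \<sigma> t = (\<Prod>k<t. (L k)^2) * (\<Sum>k<t. (\<sigma> k)^2 / psi L k)"

definition eps1 :: "real \<Rightarrow> real" where
  "eps1 \<epsilon> = 2 * ln (1 + 2 / \<epsilon>) / (1 - \<epsilon>)^2"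

definition eps2 :: "real \<Rightarrow> real" where
  "eps2 \<epsilon> = 2 / (1 - \<epsilon>)^2"

definition radius :: "(nat \<Rightarrow> real) \<Rightarrow> (nat \<Rightarrow> real) \<Rightarrow> nat \<Rightarrow> real \<Rightarrow> real \<Rightarrow> nat \<Rightarrow> nat \<Rightarrow> real" where
  "radius L \<sigma> n \<epsilon> \<delta> T t = sqrt (Psi L \<sigma> t * (eps1 \<epsilon> * real n + eps2 \<epsilon> * ln (real T / \<delta>)))"

end

theory Submission imports Defs begin

(* The deviation e_t = X_t - x_t obeys e_(t+1) = G_t(e_t) + w_t with |G_t(e)| <= L_t |e|, and w_t is
   independent of e_t.  Writing exp(s |v|^2 / 2) as a Gaussian integral of exp(<h, v>) over h and
   applying the sub-Gaussian bound to the noise inside this integral gives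
     E exp(s |e_(t+1)|^2 / 2) <= (1 - s sigma_t^2)^(-n/2) E exp(s' |e_t|^2 / 2),
     s' = s L_t^2 / (1 - s sigma_t^2),
   so by induction E exp(s |e_t|^2 / 2) <= (1 - s Psi_t)^(-n/2) whenever s Psi_t < 1, as
   1 - s Psi_(t+1) = (1 - s sigma_t^2) (1 - s' Psi_t).  The Chernoff bound with s = (1 - eps)^2 / Psi_t
   makes P(|e_t| > r_(delta,t)) <= delta / T, and a union bound over t = 1..T concludes. *)

lemma nn_integral_exp_neg_square_half:
  "(\<integral>\<^sup>+x. ennreal (exp (- x\<^sup>2 / 2)) \<partial>lborel) = ennreal (sqrt (2 * pi))"
proof -
  have "(\<integral>\<^sup>+x. ennreal (normal_density 0 1 x) \<partial>lborel) = ennreal 1"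
    by (subst nn_integral_eq_integral) auto
  moreover have "\<And>x. ennreal (exp (- x\<^sup>2 / 2)) = ennreal (sqrt (2 * pi)) * ennreal (normal_density 0 1 x)"
    by (simp add: normal_density_def ennreal_mult'[symmetric] field_simps)
  ultimately show ?thesis
    by (simp add: nn_integral_cmult)
qed

lemma nn_integral_exp_neg_norm_square_half:
  "(\<integral>\<^sup>+h. ennreal (exp (- (norm (h::'n::euclidean_space))\<^sup>2 / 2)) \<partial>lborel)
     = ennreal (sqrt (2 * pi) ^ DIM('n))"
proof -
  have "(norm h)\<^sup>2 = (\<Sum>b\<in>Basis. (h \<bullet> b)\<^sup>2)" for h :: 'n
    unfolding power2_norm_eq_inner euclidean_inner[of h h] by (simp only: power2_eq_square)
  then have "ennreal (exp (- (norm h)\<^sup>2 / 2)) = (\<Prod>b\<in>Basis. ennreal (exp (- (h \<bullet> b)\<^sup>2 / 2)))"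
    for h :: 'n
    by (simp add: prod_ennreal exp_sum[symmetric] sum_divide_distrib sum_negf)
  then have "(\<integral>\<^sup>+h. ennreal (exp (- (norm (h::'n))\<^sup>2 / 2)) \<partial>lborel)
     = (\<integral>\<^sup>+h. (\<Prod>b\<in>(Basis::'n set). ennreal (exp (- (h \<bullet> b)\<^sup>2 / 2))) \<partial>lborel)"
    by (simp only:)
  also have "\<dots> = (\<Prod>b\<in>(Basis::'n set). (\<integral>\<^sup>+x. ennreal (exp (- x\<^sup>2 / 2)) \<partial>lborel))"
    by (rule nn_integral_lborel_prod) auto
  also have "\<dots> = ennreal (sqrt (2 * pi) ^ DIM('n))"
    by (subst nn_integral_exp_neg_square_half) (simp add: ennreal_power)
  finally show ?thesis .
qed

lemma complete_square_inner:
  fixes v x :: "'a::real_inner"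
  assumes "c > 0" and "c * (k * k) = 1"
  shows "((1 / c) *\<^sub>R v + k *\<^sub>R x) \<bullet> v - c * (norm ((1 / c) *\<^sub>R v + k *\<^sub>R x))\<^sup>2 / 2
    = (norm v)\<^sup>2 / (2 * c) - (norm x)\<^sup>2 / 2"
proof -
  have "(norm ((1 / c) *\<^sub>R v + k *\<^sub>R x))\<^sup>2 = (v \<bullet> v) / c\<^sup>2 + 2 * (k / c) * (x \<bullet> v) + k\<^sup>2 * (x \<bullet> x)"
    unfolding power2_norm_eq_inner
    by (simp add: inner_commute power2_eq_square algebra_simps)
  then show ?thesis
    unfolding power2_norm_eq_inner using assms
    by (simp add: inner_add_left inner_add_right inner_commute field_simps power2_eq_square)
qed

lemma nn_integral_exp_inner_gaussian:
  fixes v :: "'n::euclidean_space"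
  assumes c: "c > 0"
  shows "(\<integral>\<^sup>+h. ennreal (exp (h \<bullet> v - c * (norm h)\<^sup>2 / 2)) \<partial>lborel)
     = ennreal (sqrt (2 * pi) ^ DIM('n) * c powr (- real DIM('n) / 2) * exp ((norm v)\<^sup>2 / (2 * c)))"
proof -
  define k where "k = 1 / sqrt c"
  have k: "k > 0" "c * (k * k) = 1"
    using c by (auto simp: k_def power_divide)
  define F where "F = (\<lambda>h::'n. ennreal (exp (h \<bullet> v - c * (norm h)\<^sup>2 / 2)))"
  have [measurable]: "F \<in> borel_measurable borel"
    unfolding F_def by measurable
  have completed_square: "ennreal (k ^ DIM('n)) * F ((1 / c) *\<^sub>R v + k *\<^sub>R x) =
      ennreal (k ^ DIM('n) * exp ((norm v)\<^sup>2 / (2 * c))) * ennreal (exp (- (norm x)\<^sup>2 / 2))" for x :: 'n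
    using k unfolding F_def complete_square_inner[OF c k(2)]
    by (simp add: ennreal_mult'[symmetric] exp_add[symmetric] exp_diff mult.assoc)
  have "(lborel::'n measure)
      = density (distr lborel borel (\<lambda>x. (1 / c) *\<^sub>R v + k *\<^sub>R x)) (\<lambda>_. \<bar>k\<bar> ^ DIM('n))"
    using k by (intro lborel_affine) auto
  then have "(\<integral>\<^sup>+h. F h \<partial>lborel)
      = (\<integral>\<^sup>+h. F h \<partial>density (distr lborel borel (\<lambda>x. (1 / c) *\<^sub>R v + k *\<^sub>R x)) (\<lambda>_. \<bar>k\<bar> ^ DIM('n)))"
    by (rule arg_cong)
  also have "\<dots> = (\<integral>\<^sup>+x. ennreal (k ^ DIM('n)) * F ((1 / c) *\<^sub>R v + k *\<^sub>R x) \<partial>lborel)"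
    using k by (simp add: nn_integral_density nn_integral_distr)
  also have "\<dots> = (\<integral>\<^sup>+x. ennreal (k ^ DIM('n) * exp ((norm v)\<^sup>2 / (2 * c))) * ennreal (exp (- (norm (x::'n))\<^sup>2 / 2)) \<partial>lborel)"
    by (simp only: completed_square)
  also have "\<dots> = ennreal (k ^ DIM('n) * exp ((norm v)\<^sup>2 / (2 * c))) * ennreal (sqrt (2 * pi) ^ DIM('n))"
    using nn_integral_exp_neg_norm_square_half[where 'n='n] by (simp add: nn_integral_cmult)
  also have "k ^ DIM('n) = c powr (- real DIM('n) / 2)"
    using c unfolding k_def
    by (simp add: powr_half_sqrt[symmetric] powr_minus_divide[symmetric] powr_realpow[symmetric] powr_powr)
  finally show ?thesis
    unfolding F_def using c by (simp add: ennreal_mult'[symmetric] mult_ac)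
qed

lemma subG_nn_integral_exp_inner:
  assumes M: "prob_space M" and sg: "subG M w s2"
  shows "(\<integral>\<^sup>+\<omega>. ennreal (exp (h \<bullet> w \<omega>)) \<partial>M) \<le> ennreal (exp (s2 * (norm h)\<^sup>2 / 2))"
proof (cases "h = 0")
  case True
  then show ?thesis
    using M by (simp add: prob_space.emeasure_space_1)
next
  case False
  define l where "l = (1 / norm h) *\<^sub>R h"
  have "norm l = 1"
    using False by (simp add: l_def)
  moreover have "\<And>x. norm h * (l \<bullet> x) = h \<bullet> x"
    using False by (simp add: l_def)
  ultimately show ?thesis
    using sg unfolding subG_def
    by (auto dest!: spec[of _ l] spec[of _ "norm h"] simp: mult_ac)
qed

lemma subG_nn_integral_exp_inner_add:
  assumes M: "prob_space M" and sg: "subG M w s2"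
  shows "(\<integral>\<^sup>+\<omega>. ennreal (exp (h \<bullet> (a + w \<omega>) - c * (norm h)\<^sup>2 / 2)) \<partial>M)
      \<le> ennreal (exp (h \<bullet> a - (c - s2) * (norm h)\<^sup>2 / 2))"
proof -
  have [measurable]: "w \<in> borel_measurable M"
    using sg unfolding subG_def by auto
  have "(\<integral>\<^sup>+\<omega>. ennreal (exp (h \<bullet> (a + w \<omega>) - c * (norm h)\<^sup>2 / 2)) \<partial>M)
     = (\<integral>\<^sup>+\<omega>. ennreal (exp (h \<bullet> a - c * (norm h)\<^sup>2 / 2)) * ennreal (exp (h \<bullet> w \<omega>)) \<partial>M)"
    by (intro nn_integral_cong) (simp add: ennreal_mult'[symmetric] exp_add[symmetric] inner_add_right)
  also have "\<dots> = ennreal (exp (h \<bullet> a - c * (norm h)\<^sup>2 / 2)) * (\<integral>\<^sup>+\<omega>. ennreal (exp (h \<bullet> w \<omega>)) \<partial>M)"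
    by (rule nn_integral_cmult) measurable
  also have "\<dots> \<le> ennreal (exp (h \<bullet> a - c * (norm h)\<^sup>2 / 2)) * ennreal (exp (s2 * (norm h)\<^sup>2 / 2))"
    by (intro mult_left_mono subG_nn_integral_exp_inner[OF M sg]) auto
  also have "\<dots> = ennreal (exp (h \<bullet> a - (c - s2) * (norm h)\<^sup>2 / 2))"
    by (simp add: ennreal_mult'[symmetric] exp_add[symmetric] algebra_simps diff_divide_distrib add_divide_distrib)
  finally show ?thesis .
qed

lemma subG_nn_integral_exp_norm_square:
  fixes w :: "'a \<Rightarrow> 'n::euclidean_space"
  assumes M: "prob_space M" and sg: "subG M w s2" and s: "s > 0" "s * s2 < 1"
  shows "(\<integral>\<^sup>+\<omega>. ennreal (exp (s * (norm (a + w \<omega>))\<^sup>2 / 2)) \<partial>M)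
     \<le> ennreal ((1 - s * s2) powr (- real DIM('n) / 2) * exp (s / (1 - s * s2) * (norm a)\<^sup>2 / 2))"
proof -
  interpret prob_space M by fact
  interpret pair_sigma_finite lborel M
    by (simp add: pair_sigma_finite_def lborel.sigma_finite_measure_axioms prob_space_imp_sigma_finite M)
  have [measurable]: "w \<in> borel_measurable M"
    using sg unfolding subG_def by auto
  define n where "n = real DIM('n)"
  define K where "K = sqrt (2 * pi) ^ DIM('n) * (1 / s) powr (- n / 2)"
  have K: "K > 0"
    using s by (simp add: K_def)
  have c: "1 / s - s2 > 0"
    using s by (simp add: field_simps)
  have gaussian: "ennreal K * ennreal (exp (s * (norm v)\<^sup>2 / 2)) =
      (\<integral>\<^sup>+h. ennreal (exp (h \<bullet> v - (1 / s) * (norm h)\<^sup>2 / 2)) \<partial>lborel)" for v :: 'n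
    using nn_integral_exp_inner_gaussian[of "1 / s" v] s K
    by (simp add: K_def n_def ennreal_mult'[symmetric] field_simps)
  have "ennreal K * (\<integral>\<^sup>+\<omega>. ennreal (exp (s * (norm (a + w \<omega>))\<^sup>2 / 2)) \<partial>M)
      = (\<integral>\<^sup>+\<omega>. (\<integral>\<^sup>+h. ennreal (exp (h \<bullet> (a + w \<omega>) - (1 / s) * (norm h)\<^sup>2 / 2)) \<partial>lborel) \<partial>M)"
    by (simp add: gaussian nn_integral_cmult[symmetric])
  also have "\<dots> = (\<integral>\<^sup>+h. (\<integral>\<^sup>+\<omega>. ennreal (exp (h \<bullet> (a + w \<omega>) - (1 / s) * (norm h)\<^sup>2 / 2)) \<partial>M) \<partial>lborel)"
    by (rule Fubini') measurable
  also have "\<dots> \<le> (\<integral>\<^sup>+h. ennreal (exp (h \<bullet> a - (1 / s - s2) * (norm h)\<^sup>2 / 2)) \<partial>lborel)"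
    by (intro nn_integral_mono subG_nn_integral_exp_inner_add[OF M sg])
  also have "\<dots> = ennreal (sqrt (2 * pi) ^ DIM('n) * (1 / s - s2) powr (- n / 2) * exp ((norm a)\<^sup>2 / (2 * (1 / s - s2))))"
    using nn_integral_exp_inner_gaussian[OF c, of a] by (simp add: n_def)
  also have "\<dots> = ennreal K * ennreal ((1 - s * s2) powr (- n / 2) * exp (s / (1 - s * s2) * (norm a)\<^sup>2 / 2))"
  proof -
    have "(1 / s - s2) powr (- n / 2) = (1 / s) powr (- n / 2) * (1 - s * s2) powr (- n / 2)"
      using s by (subst powr_mult[symmetric]) (auto simp: field_simps)
    moreover have "(norm a)\<^sup>2 / (2 * (1 / s - s2)) = s / (1 - s * s2) * (norm a)\<^sup>2 / 2"
      using s by (simp add: field_simps)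
    ultimately show ?thesis
      using K by (simp add: K_def ennreal_mult'[symmetric] mult_ac)
  qed
  finally show ?thesis
    using K by (subst (asm) ennreal_mult_le_mult_iff) (auto simp: n_def)
qed

lemma indep_var_nn_integral_eq:
  fixes Y Z :: "'a \<Rightarrow> 'b::topological_space"
  assumes M: "prob_space M" and ind: "prob_space.indep_var M borel Y borel Z"
    and F[measurable]: "F \<in> borel_measurable (borel \<Otimes>\<^sub>M borel)"
  shows "(\<integral>\<^sup>+\<omega>. F (Y \<omega>, Z \<omega>) \<partial>M) = (\<integral>\<^sup>+\<omega>. (\<integral>\<^sup>+\<omega>'. F (Y \<omega>, Z \<omega>') \<partial>M) \<partial>M)"
proof -
  interpret prob_space M by fact
  have [measurable]: "Y \<in> borel_measurable M" "Z \<in> borel_measurable M"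
    and distr_pair: "distr M borel Y \<Otimes>\<^sub>M distr M borel Z = distr M (borel \<Otimes>\<^sub>M borel) (\<lambda>x. (Y x, Z x))"
    using ind by (auto simp: indep_var_distribution_eq)
  interpret PY: prob_space "distr M borel Y" by (rule prob_space_distr) simp
  interpret PZ: prob_space "distr M borel Z" by (rule prob_space_distr) simp
  interpret pair_sigma_finite "distr M borel Y" "distr M borel Z"
    by (simp add: pair_sigma_finite_def PY.sigma_finite_measure_axioms PZ.sigma_finite_measure_axioms)
  have "measurable (distr M borel Y \<Otimes>\<^sub>M distr M borel Z) (borel::ennreal measure) = measurable (borel \<Otimes>\<^sub>M borel) borel"
    by (intro measurable_cong_sets sets_pair_measure_cong) auto
  then have F_pair: "F \<in> borel_measurable (distr M borel Y \<Otimes>\<^sub>M distr M borel Z)"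
    using F by simp
  have "(\<integral>\<^sup>+\<omega>. F (Y \<omega>, Z \<omega>) \<partial>M) = (\<integral>\<^sup>+p. F p \<partial>(distr M borel Y \<Otimes>\<^sub>M distr M borel Z))"
    by (simp add: distr_pair nn_integral_distr)
  also have "\<dots> = (\<integral>\<^sup>+y. (\<integral>\<^sup>+z. F (y, z) \<partial>distr M borel Z) \<partial>distr M borel Y)"
    by (rule PZ.nn_integral_fst[OF F_pair, symmetric])
  also have "\<dots> = (\<integral>\<^sup>+\<omega>. (\<integral>\<^sup>+\<omega>'. F (Y \<omega>, Z \<omega>') \<partial>M) \<partial>M)"
    by (simp add: nn_integral_distr)
  finally show ?thesis .
qed

lemma (in prob_space) prob_norm_gt_le_mgf:
  fixes Z :: "'a \<Rightarrow> 'b::real_normed_vector"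
  assumes [measurable]: "Z \<in> borel_measurable M" and "s > 0" "r \<ge> 0" "B \<ge> 0"
    and mgf: "(\<integral>\<^sup>+\<omega>. ennreal (exp (s * (norm (Z \<omega>))\<^sup>2 / 2)) \<partial>M) \<le> ennreal B"
  shows "prob {\<omega> \<in> space M. r < norm (Z \<omega>)} \<le> exp (- s * r\<^sup>2 / 2) * B"
proof -
  have "{\<omega> \<in> space M. r < norm (Z \<omega>)} \<subseteq> {\<omega> \<in> space M. r\<^sup>2 \<le> (norm (Z \<omega>))\<^sup>2}"
    using \<open>r \<ge> 0\<close> by (auto intro: power_mono)
  then have "emeasure M {\<omega> \<in> space M. r < norm (Z \<omega>)} \<le> emeasure M {\<omega> \<in> space M. r\<^sup>2 \<le> (norm (Z \<omega>))\<^sup>2}"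
    by (intro emeasure_mono) measurable
  also have "\<dots> \<le> ennreal (exp (- (s / 2) * r\<^sup>2))
      * (\<integral>\<^sup>+\<omega>. ennreal (exp (s / 2 * (norm (Z \<omega>))\<^sup>2)) * indicator (space M) \<omega> \<partial>M)"
    using \<open>s > 0\<close> by (intro Chernoff_ineq_nn_integral_ge) auto
  also have "\<dots> = ennreal (exp (- s * r\<^sup>2 / 2)) * (\<integral>\<^sup>+\<omega>. ennreal (exp (s * (norm (Z \<omega>))\<^sup>2 / 2)) \<partial>M)"
    by (intro arg_cong2[where f = "(*)"] nn_integral_cong) (simp_all add: mult.commute)
  also have "\<dots> \<le> ennreal (exp (- s * r\<^sup>2 / 2)) * ennreal B"
    by (intro mult_left_mono mgf) simp
  finally show ?thesis
    using \<open>B \<ge> 0\<close> by (simp add: emeasure_eq_measure ennreal_mult'[symmetric])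
qed

lemma (in prob_space) prob_all_ge_union_bound:
  assumes "finite I"
    and "\<And>i. i \<in> I \<Longrightarrow> {\<omega> \<in> space M. \<not> P i \<omega>} \<in> events"
    and "\<And>i. i \<in> I \<Longrightarrow> prob {\<omega> \<in> space M. \<not> P i \<omega>} \<le> e i"
  shows "prob {\<omega> \<in> space M. \<forall>i\<in>I. P i \<omega>} \<ge> 1 - (\<Sum>i\<in>I. e i)"
proof -
  have "{\<omega> \<in> space M. \<forall>i\<in>I. P i \<omega>} = space M - (\<Union>i\<in>I. {\<omega> \<in> space M. \<not> P i \<omega>})"
    by auto
  moreover have "(\<Union>i\<in>I. {\<omega> \<in> space M. \<not> P i \<omega>}) \<in> events"
    using assms(1,2) by (rule sets.finite_UN)
  moreover have "prob (\<Union>i\<in>I. {\<omega> \<in> space M. \<not> P i \<omega>}) \<le> (\<Sum>i\<in>I. prob {\<omega> \<in> space M. \<not> P i \<omega>})"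
    using assms(1,2) by (rule measure_UNION_le)
  moreover have "(\<Sum>i\<in>I. prob {\<omega> \<in> space M. \<not> P i \<omega>}) \<le> (\<Sum>i\<in>I. e i)"
    using assms(3) by (rule sum_mono)
  ultimately show ?thesis
    by (simp add: prob_compl)
qed

lemma lipschitz_borel_measurable:
  fixes g :: "'a::real_normed_vector \<Rightarrow> 'b::real_normed_vector"
  assumes "\<And>y z. norm (g y - g z) \<le> C * norm (y - z)"
  shows "g \<in> borel_measurable borel"
proof -
  have "norm (g y - g z) \<le> max C 0 * norm (y - z)" for y z
    using assms[of y z] by (meson max.cobounded1 mult_right_mono norm_ge_zero order_trans)
  then have "lipschitz_on (max C 0) UNIV g"
    by (auto simp: lipschitz_on_def dist_norm)
  then show ?thesis
    by (intro borel_measurable_continuous_onI lipschitz_on_continuous_on)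
qed

primrec traj :: "(nat \<Rightarrow> 'n \<Rightarrow> 'n::real_vector) \<Rightarrow> 'n \<Rightarrow> nat \<Rightarrow> (nat \<Rightarrow> 'n) \<Rightarrow> 'n" where
  "traj F x0 0 v = x0"
| "traj F x0 (Suc t) v = F t (traj F x0 t v) + v t"

lemma traj_cong: "(\<And>k. k < t \<Longrightarrow> v k = v' k) \<Longrightarrow> traj F x0 t v = traj F x0 t v'"
  by (induction t) auto

lemma traj_eqI:
  assumes "t \<le> T" and "Z 0 = x0" and "\<And>t. t < T \<Longrightarrow> Z (Suc t) = F t (Z t) + v t"
  shows "Z t = traj F x0 t v"
  using assms(1) by (induction t) (simp_all add: assms(2,3))

lemma traj_measurable_PiM:
  fixes F :: "nat \<Rightarrow> 'n::euclidean_space \<Rightarrow> 'n"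
  assumes F: "\<And>t. F t \<in> borel_measurable borel"
  shows "traj F x0 t \<in> borel_measurable (PiM {..<t} (\<lambda>_. borel))"
proof (induction t)
  case 0
  show ?case by simp
next
  case (Suc t)
  have "(\<lambda>v. restrict v {..<t}) \<in> measurable (PiM {..<Suc t} (\<lambda>_. borel)) (PiM {..<t} (\<lambda>_. borel))"
    by (rule measurable_restrict_subset) auto
  from measurable_comp[OF this Suc.IH]
  have "(\<lambda>v. traj F x0 t (restrict v {..<t})) \<in> borel_measurable (PiM {..<Suc t} (\<lambda>_. borel))"
    by (simp add: comp_def)
  then have "(\<lambda>v. F t (traj F x0 t (restrict v {..<t}))) \<in> borel_measurable (PiM {..<Suc t} (\<lambda>_. borel))"
    using measurable_comp[OF _ F] by (simp add: comp_def)
  moreover have "(\<lambda>v. v t) \<in> borel_measurable (PiM {..<Suc t} (\<lambda>_. borel))"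
    by (rule measurable_component_singleton) auto
  ultimately have "(\<lambda>v. F t (traj F x0 t (restrict v {..<t})) + v t) \<in> borel_measurable (PiM {..<Suc t} (\<lambda>_. borel))"
    by (rule borel_measurable_add)
  moreover have "traj F x0 (Suc t) v = F t (traj F x0 t (restrict v {..<t})) + v t" for v
    using traj_cong[of t "restrict v {..<t}" v] by simp
  ultimately show ?case by simp
qed

lemma borel_measurable_traj:
  fixes F :: "nat \<Rightarrow> 'n::euclidean_space \<Rightarrow> 'n"
  assumes "\<And>t. F t \<in> borel_measurable borel" and "\<And>t. w t \<in> borel_measurable M"
  shows "(\<lambda>\<omega>. traj F x0 t (\<lambda>k. w k \<omega>)) \<in> borel_measurable M"
proof (induction t)
  case (Suc t)
  then have "(\<lambda>\<omega>. F t (traj F x0 t (\<lambda>k. w k \<omega>))) \<in> borel_measurable M"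
    using measurable_compose[OF _ assms(1)] by blast
  then show ?case
    using assms(2)[of t] by (simp add: borel_measurable_add)
qed simp

lemma indep_var_traj_noise:
  fixes F :: "nat \<Rightarrow> 'n::euclidean_space \<Rightarrow> 'n"
  assumes M: "prob_space M" and indep: "prob_space.indep_vars M (\<lambda>_. borel) w UNIV"
    and F: "\<And>t. F t \<in> borel_measurable borel"
  shows "prob_space.indep_var M borel (\<lambda>\<omega>. traj F x0 t (\<lambda>k. w k \<omega>)) borel (w t)"
proof -
  interpret prob_space M by fact
  have "indep_var (PiM {..<t} (\<lambda>_. borel)) (\<lambda>\<omega>. restrict (\<lambda>i. w i \<omega>) {..<t})
                  (PiM {t} (\<lambda>_. borel)) (\<lambda>\<omega>. restrict (\<lambda>i. w i \<omega>) {t})"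
    by (rule indep_var_restrict[OF indep]) auto
  then have "indep_var borel (traj F x0 t \<circ> (\<lambda>\<omega>. restrict (\<lambda>i. w i \<omega>) {..<t}))
                       borel ((\<lambda>v. v t) \<circ> (\<lambda>\<omega>. restrict (\<lambda>i. w i \<omega>) {t}))"
    by (rule indep_var_compose[OF _ traj_measurable_PiM[OF F] measurable_component_singleton]) simp
  moreover have "traj F x0 t \<circ> (\<lambda>\<omega>. restrict (\<lambda>i. w i \<omega>) {..<t}) = (\<lambda>\<omega>. traj F x0 t (\<lambda>k. w k \<omega>))"
    unfolding comp_def by (intro ext traj_cong) simp
  moreover have "(\<lambda>v. v t) \<circ> (\<lambda>\<omega>. restrict (\<lambda>i. w i \<omega>) {t}) = w t"
    by auto
  ultimately show ?thesis
    by simp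
qed

lemma psi_pos: "(\<And>k. L k > 0) \<Longrightarrow> psi L t > 0"
  unfolding psi_def by (intro prod_pos zero_less_power)

lemma Psi_nonneg: "(\<And>k. L k > 0) \<Longrightarrow> Psi L \<sigma> t \<ge> 0"
  unfolding Psi_def by (intro mult_nonneg_nonneg prod_nonneg sum_nonneg divide_nonneg_pos psi_pos) auto

lemma Psi_pos:
  assumes "\<And>k. L k > 0" "\<And>k. \<sigma> k > 0" "t \<ge> 1"
  shows "Psi L \<sigma> t > 0"
proof -
  have "0 \<in> {..<t}"
    using assms(3) by simp
  then have "{..<t} \<noteq> {}"
    by blast
  then show ?thesis
    unfolding Psi_def using assms(1,2)
    by (intro mult_pos_pos prod_pos sum_pos divide_pos_pos psi_pos zero_less_power) auto
qed

lemma Psi_Suc: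
  assumes "\<And>k. L k \<noteq> 0"
  shows "Psi L \<sigma> (Suc t) = (L t)\<^sup>2 * Psi L \<sigma> t + (\<sigma> t)\<^sup>2"
proof -
  have psi_t: "psi L t = (\<Prod>k<Suc t. (L k)\<^sup>2)"
    unfolding psi_def by (simp add: lessThan_Suc_atMost)
  have "(\<Prod>k<Suc t. (L k)\<^sup>2) \<noteq> 0"
    using assms by simp
  then have "(\<Prod>k<Suc t. (L k)\<^sup>2) * ((\<sigma> t)\<^sup>2 / psi L t) = (\<sigma> t)\<^sup>2"
    unfolding psi_t by simp
  then show ?thesis
    unfolding Psi_def by (simp add: algebra_simps)
qed

lemma Psi_Suc_split:
  assumes L: "\<And>k. L k > 0" and s: "s > 0" "s * Psi L \<sigma> (Suc t) < 1"
  defines "s' \<equiv> s / (1 - s * (\<sigma> t)\<^sup>2) * (L t)\<^sup>2"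
  shows "s * (\<sigma> t)\<^sup>2 < 1" and "s' > 0" and "s' * Psi L \<sigma> t < 1"
    and "(1 - s * (\<sigma> t)\<^sup>2) * (1 - s' * Psi L \<sigma> t) = 1 - s * Psi L \<sigma> (Suc t)"
proof -
  have Psi_step: "Psi L \<sigma> (Suc t) = (L t)\<^sup>2 * Psi L \<sigma> t + (\<sigma> t)\<^sup>2"
    using L by (intro Psi_Suc) (metis less_irrefl)
  have "s * ((L t)\<^sup>2 * Psi L \<sigma> t) \<ge> 0"
    using s(1) Psi_nonneg[OF L] by simp
  then show s\<sigma>: "s * (\<sigma> t)\<^sup>2 < 1"
    using s(2) unfolding Psi_step by (simp add: algebra_simps)
  then show factor: "(1 - s * (\<sigma> t)\<^sup>2) * (1 - s' * Psi L \<sigma> t) = 1 - s * Psi L \<sigma> (Suc t)"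
    unfolding s'_def Psi_step by (simp add: field_simps)
  show "s' > 0"
    using s(1) s\<sigma> L[of t] by (simp add: s'_def)
  have "0 < (1 - s * (\<sigma> t)\<^sup>2) * (1 - s' * Psi L \<sigma> t)"
    using s(2) factor by simp
  then show "s' * Psi L \<sigma> t < 1"
    using s\<sigma> zero_less_mult_pos by fastforce
qed

lemma exp_radius_bound:
  fixes n T :: nat
  assumes \<epsilon>: "0 < \<epsilon>" "\<epsilon> < 1" and \<delta>: "0 < \<delta>" "\<delta> \<le> 1" and T: "T \<ge> 1"
  shows "exp (- ((1 - \<epsilon>)\<^sup>2 * (eps1 \<epsilon> * real n + eps2 \<epsilon> * ln (real T / \<delta>)) / 2))
      * (1 - (1 - \<epsilon>)\<^sup>2) powr (- real n / 2) \<le> \<delta> / real T"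
proof -
  define u where "u = (1 - \<epsilon>)\<^sup>2"
  have u: "1 - u = \<epsilon> * (2 - \<epsilon>)"
    by (simp add: u_def power2_eq_square algebra_simps)
  have exponent: "u * (eps1 \<epsilon> * real n + eps2 \<epsilon> * ln (real T / \<delta>)) / 2
      = real n * ln (1 + 2 / \<epsilon>) + ln (real T / \<delta>)"
    using \<epsilon> by (simp add: u_def eps1_def eps2_def field_simps)
  have powr_exp: "(1 - u) powr (- real n / 2) = exp (- real n / 2 * ln (1 - u))"
    using u \<epsilon> by (simp add: powr_def)
  have "- ln (1 - u) \<le> 2 * ln (1 + 2 / \<epsilon>)"
  proof -
    have "1 + 2 / \<epsilon> > 0"
      using \<epsilon> by (simp add: add_pos_pos)
    have "(2::real)\<^sup>2 \<le> (\<epsilon> + 2)\<^sup>2"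
      using \<epsilon> by (intro power_mono) auto
    then have "1 * 4 \<le> (2 - \<epsilon>) * (\<epsilon> + 2)\<^sup>2"
      using \<epsilon> by (intro mult_mono) auto
    then have "1 \<le> (2 - \<epsilon>) * (\<epsilon> + 2)\<^sup>2 / \<epsilon>"
      using \<epsilon> by (simp add: le_divide_eq)
    also have "\<dots> = (1 - u) * (1 + 2 / \<epsilon>)\<^sup>2"
      using \<epsilon> unfolding u by (simp add: field_simps power2_eq_square)
    finally have "0 \<le> ln ((1 - u) * (1 + 2 / \<epsilon>)\<^sup>2)"
      by simp
    also have "\<dots> = ln (1 - u) + 2 * ln (1 + 2 / \<epsilon>)"
      using u \<epsilon> \<open>1 + 2 / \<epsilon> > 0\<close> by (simp add: ln_mult ln_realpow)
    finally show ?thesis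
      by simp
  qed
  then have "real n * (- ln (1 - u)) \<le> real n * (2 * ln (1 + 2 / \<epsilon>))"
    by (rule mult_left_mono) simp
  then have "exp (- (real n * ln (1 + 2 / \<epsilon>) + ln (real T / \<delta>))) * exp (- real n / 2 * ln (1 - u))
      \<le> exp (- ln (real T / \<delta>))"
    by (simp add: exp_add[symmetric] algebra_simps)
  also have "\<dots> = \<delta> / real T"
    using T \<delta> by (simp add: ln_div exp_diff)
  finally show ?thesis
    unfolding u_def[symmetric] exponent powr_exp .
qed

lemma nn_integral_exp_norm_square_step:
  fixes Y W :: "'a \<Rightarrow> 'n::euclidean_space"
  assumes M: "prob_space M" and ind: "prob_space.indep_var M borel Y borel W"
    and sg: "subG M W s2" and G[measurable]: "G \<in> borel_measurable borel"
    and G_bound: "\<And>y. norm (G y) \<le> K * norm (y - a)"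
    and s: "s > 0" "s * s2 < 1"
  shows "(\<integral>\<^sup>+\<omega>. ennreal (exp (s * (norm (G (Y \<omega>) + W \<omega>))\<^sup>2 / 2)) \<partial>M)
     \<le> ennreal ((1 - s * s2) powr (- real DIM('n) / 2)) *
       (\<integral>\<^sup>+\<omega>. ennreal (exp (s / (1 - s * s2) * K\<^sup>2 * (norm (Y \<omega> - a))\<^sup>2 / 2)) \<partial>M)"
proof -
  interpret prob_space M by fact
  have [measurable]: "Y \<in> borel_measurable M"
    using indep_var_rv1[OF ind] by simp
  define A where "A = (1 - s * s2) powr (- real DIM('n) / 2)"
  define c where "c = s / (1 - s * s2)"
  have "c > 0"
    using s by (simp add: c_def)
  have contraction: "A * exp (c * (norm (G y))\<^sup>2 / 2) \<le> A * exp (c * K\<^sup>2 * (norm (y - a))\<^sup>2 / 2)" for y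
  proof -
    have "(norm (G y))\<^sup>2 \<le> (K * norm (y - a))\<^sup>2"
      using G_bound[of y] by (intro power_mono) auto
    then show ?thesis
      using \<open>c > 0\<close> by (auto simp: A_def power_mult_distrib mult.assoc intro!: mult_left_mono)
  qed
  have "(\<integral>\<^sup>+\<omega>. ennreal (exp (s * (norm (G (Y \<omega>) + W \<omega>))\<^sup>2 / 2)) \<partial>M)
      = (\<integral>\<^sup>+\<omega>. (\<integral>\<^sup>+\<omega>'. ennreal (exp (s * (norm (G (Y \<omega>) + W \<omega>'))\<^sup>2 / 2)) \<partial>M) \<partial>M)"
    using indep_var_nn_integral_eq[OF M ind, of "\<lambda>(y, z). ennreal (exp (s * (norm (G y + z))\<^sup>2 / 2))"]
    by simp
  also have "\<dots> \<le> (\<integral>\<^sup>+\<omega>. ennreal (A * exp (c * (norm (G (Y \<omega>)))\<^sup>2 / 2)) \<partial>M)"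
    unfolding A_def c_def by (intro nn_integral_mono subG_nn_integral_exp_norm_square[OF M sg s])
  also have "\<dots> \<le> (\<integral>\<^sup>+\<omega>. ennreal A * ennreal (exp (c * K\<^sup>2 * (norm (Y \<omega> - a))\<^sup>2 / 2)) \<partial>M)"
    using contraction by (intro nn_integral_mono) (simp add: A_def ennreal_mult'[symmetric] ennreal_leI)
  also have "\<dots> = ennreal A * (\<integral>\<^sup>+\<omega>. ennreal (exp (c * K\<^sup>2 * (norm (Y \<omega> - a))\<^sup>2 / 2)) \<partial>M)"
    by (rule nn_integral_cmult) measurable
  finally show ?thesis
    unfolding A_def c_def .
qed

lemma traj_deviation_mgf:
  fixes w :: "nat \<Rightarrow> 'a \<Rightarrow> 'n::euclidean_space" and F :: "nat \<Rightarrow> 'n \<Rightarrow> 'n"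
  assumes M: "prob_space M" and indep: "prob_space.indep_vars M (\<lambda>_. borel) w UNIV"
    and noise: "\<And>t. subG M (w t) ((\<sigma> t)\<^sup>2)"
    and L_pos: "\<And>t. L t > 0" and lip: "\<And>t y z. norm (F t y - F t z) \<le> L t * norm (y - z)"
  shows "s > 0 \<Longrightarrow> s * Psi L \<sigma> t < 1 \<Longrightarrow>
    (\<integral>\<^sup>+\<omega>. ennreal (exp (s * (norm (traj F x0 t (\<lambda>k. w k \<omega>) - traj F x0 t (\<lambda>_. 0)))\<^sup>2 / 2)) \<partial>M)
      \<le> ennreal ((1 - s * Psi L \<sigma> t) powr (- real DIM('n) / 2))"
proof (induction t arbitrary: s)
  case 0
  then show ?case
    using M by (simp add: prob_space.emeasure_space_1 Psi_def)
next
  case (Suc t)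
  define Y where "Y = (\<lambda>\<omega>. traj F x0 t (\<lambda>k. w k \<omega>))"
  define a where "a = traj F x0 t (\<lambda>_. 0)"
  define s' where "s' = s / (1 - s * (\<sigma> t)\<^sup>2) * (L t)\<^sup>2"
  have F_meas: "F t \<in> borel_measurable borel" for t
    using lip by (rule lipschitz_borel_measurable)
  note s_split = Psi_Suc_split[OF L_pos Suc.prems, folded s'_def]
  have "(\<integral>\<^sup>+\<omega>. ennreal (exp (s * (norm (traj F x0 (Suc t) (\<lambda>k. w k \<omega>) - traj F x0 (Suc t) (\<lambda>_. 0)))\<^sup>2 / 2)) \<partial>M)
      = (\<integral>\<^sup>+\<omega>. ennreal (exp (s * (norm ((\<lambda>y. F t y - F t a) (Y \<omega>) + w t \<omega>))\<^sup>2 / 2)) \<partial>M)"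
    by (simp add: Y_def a_def algebra_simps)
  also have "\<dots> \<le> ennreal ((1 - s * (\<sigma> t)\<^sup>2) powr (- real DIM('n) / 2)) *
      (\<integral>\<^sup>+\<omega>. ennreal (exp (s' * (norm (Y \<omega> - a))\<^sup>2 / 2)) \<partial>M)"
    unfolding s'_def
  proof (rule nn_integral_exp_norm_square_step[OF M _ noise _ lip Suc.prems(1) s_split(1)])
    show "prob_space.indep_var M borel Y borel (w t)"
      unfolding Y_def by (rule indep_var_traj_noise[OF M indep F_meas])
    show "(\<lambda>y. F t y - F t a) \<in> borel_measurable borel"
      using F_meas by measurable
  qed
  also have "\<dots> \<le> ennreal ((1 - s * (\<sigma> t)\<^sup>2) powr (- real DIM('n) / 2)) *
      ennreal ((1 - s' * Psi L \<sigma> t) powr (- real DIM('n) / 2))"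
    using Suc.IH[OF s_split(2,3)] by (intro mult_left_mono) (auto simp: Y_def a_def)
  also have "\<dots> = ennreal ((1 - s * Psi L \<sigma> (Suc t)) powr (- real DIM('n) / 2))"
    using s_split by (simp add: ennreal_mult'[symmetric] powr_mult[symmetric])
  finally show ?case .
qed

lemma traj_deviation_tail:
  fixes w :: "nat \<Rightarrow> 'a \<Rightarrow> 'n::euclidean_space" and F :: "nat \<Rightarrow> 'n \<Rightarrow> 'n"
  assumes M: "prob_space M" and indep: "prob_space.indep_vars M (\<lambda>_. borel) w UNIV"
    and noise: "\<And>t. subG M (w t) ((\<sigma> t)\<^sup>2)" and \<sigma>_pos: "\<And>t. \<sigma> t > 0"
    and L_pos: "\<And>t. L t > 0" and lip: "\<And>t y z. norm (F t y - F t z) \<le> L t * norm (y - z)"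
    and \<epsilon>: "0 < \<epsilon>" "\<epsilon> < 1" and \<delta>: "0 < \<delta>" "\<delta> \<le> 1" and T: "T \<ge> 1" and t: "t \<ge> 1"
  shows "measure M {\<omega> \<in> space M. radius L \<sigma> DIM('n) \<epsilon> \<delta> T t
      < norm (traj F x0 t (\<lambda>k. w k \<omega>) - traj F x0 t (\<lambda>_. 0))} \<le> \<delta> / real T"
proof -
  interpret prob_space M by fact
  define e where "e \<omega> = traj F x0 t (\<lambda>k. w k \<omega>) - traj F x0 t (\<lambda>_. 0)" for \<omega>
  define P where "P = Psi L \<sigma> t"
  define Q where "Q = eps1 \<epsilon> * real DIM('n) + eps2 \<epsilon> * ln (real T / \<delta>)"
  define u where "u = (1 - \<epsilon>)\<^sup>2"
  define r where "r = radius L \<sigma> DIM('n) \<epsilon> \<delta> T t"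
  have "P > 0"
    unfolding P_def using L_pos \<sigma>_pos t by (rule Psi_pos)
  have "Q \<ge> 0"
    using \<epsilon> \<delta> T unfolding Q_def eps1_def eps2_def
    by (intro add_nonneg_nonneg mult_nonneg_nonneg divide_nonneg_pos) (auto simp: field_simps)
  have "(1 - \<epsilon>) * (1 - \<epsilon>) < 1 * 1"
    using \<epsilon> by (intro mult_strict_mono) auto
  then have "0 < u" "u < 1"
    using \<epsilon> by (simp_all add: u_def power2_eq_square)
  have r: "r \<ge> 0" "r\<^sup>2 = P * Q"
    using \<open>P > 0\<close> \<open>Q \<ge> 0\<close> by (simp_all add: r_def radius_def P_def Q_def)
  have [measurable]: "e \<in> borel_measurable M"
  proof -
    have "F t \<in> borel_measurable borel" for t
      using lip by (rule lipschitz_borel_measurable)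
    moreover have "w t \<in> borel_measurable M" for t
      using indep by (simp add: indep_vars_def)
    ultimately show ?thesis
      unfolding e_def by (intro borel_measurable_diff borel_measurable_traj) auto
  qed
  have "(\<integral>\<^sup>+\<omega>. ennreal (exp (u / P * (norm (e \<omega>))\<^sup>2 / 2)) \<partial>M)
      \<le> ennreal ((1 - u / P * Psi L \<sigma> t) powr (- real DIM('n) / 2))"
    unfolding e_def
    by (rule traj_deviation_mgf[OF M indep noise L_pos lip])
      (use \<open>P > 0\<close> \<open>0 < u\<close> \<open>u < 1\<close> in \<open>simp_all add: P_def\<close>)
  then have mgf: "(\<integral>\<^sup>+\<omega>. ennreal (exp (u / P * (norm (e \<omega>))\<^sup>2 / 2)) \<partial>M)
      \<le> ennreal ((1 - u) powr (- real DIM('n) / 2))"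
    using \<open>P > 0\<close> by (simp add: P_def)
  have "prob {\<omega> \<in> space M. r < norm (e \<omega>)} \<le> exp (- (u / P) * r\<^sup>2 / 2) * (1 - u) powr (- real DIM('n) / 2)"
    using \<open>P > 0\<close> \<open>0 < u\<close> r(1) mgf by (intro prob_norm_gt_le_mgf) auto
  also have "\<dots> = exp (- (u * Q / 2)) * (1 - u) powr (- real DIM('n) / 2)"
    using \<open>P > 0\<close> by (simp add: r(2))
  also have "\<dots> \<le> \<delta> / real T"
    unfolding u_def Q_def by (intro exp_radius_bound \<epsilon> \<delta> T)
  finally show ?thesis
    by (simp add: e_def r_def)
qed

lemma traj_deviation_within_radius:
  fixes w :: "nat \<Rightarrow> 'a \<Rightarrow> 'n::euclidean_space" and F :: "nat \<Rightarrow> 'n \<Rightarrow> 'n"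
  assumes M: "prob_space M" and indep: "prob_space.indep_vars M (\<lambda>_. borel) w UNIV"
    and noise: "\<And>t. subG M (w t) ((\<sigma> t)\<^sup>2)" and \<sigma>_pos: "\<And>t. \<sigma> t > 0"
    and L_pos: "\<And>t. L t > 0" and lip: "\<And>t y z. norm (F t y - F t z) \<le> L t * norm (y - z)"
    and \<epsilon>: "0 < \<epsilon>" "\<epsilon> < 1" and \<delta>: "0 < \<delta>" "\<delta> \<le> 1" and T: "T \<ge> 1"
  shows "measure M {\<omega> \<in> space M. \<forall>t\<le>T.
      norm (traj F x0 t (\<lambda>k. w k \<omega>) - traj F x0 t (\<lambda>_. 0)) \<le> radius L \<sigma> DIM('n) \<epsilon> \<delta> T t} \<ge> 1 - \<delta>"
proof -
  interpret prob_space M by fact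
  define e where "e t \<omega> = traj F x0 t (\<lambda>k. w k \<omega>) - traj F x0 t (\<lambda>_. 0)" for t \<omega>
  define r where "r = radius L \<sigma> DIM('n) \<epsilon> \<delta> T"
  have [measurable]: "e t \<in> borel_measurable M" for t
    unfolding e_def using lipschitz_borel_measurable[OF lip] indep
    by (intro borel_measurable_diff borel_measurable_traj) (auto simp: indep_vars_def)
  have "norm (e 0 \<omega>) \<le> r 0" for \<omega>
    by (simp add: e_def r_def radius_def Psi_def)
  moreover have "{..T} = insert 0 {1..T}"
    by auto
  ultimately have "{\<omega> \<in> space M. \<forall>t\<le>T. norm (e t \<omega>) \<le> r t} = {\<omega> \<in> space M. \<forall>t\<in>{1..T}. norm (e t \<omega>) \<le> r t}"
    by (metis (no_types, lifting) atMost_iff insert_iff)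
  moreover have "1 - (\<Sum>t\<in>{1..T}. \<delta> / real T) \<le> prob {\<omega> \<in> space M. \<forall>t\<in>{1..T}. norm (e t \<omega>) \<le> r t}"
  proof (rule prob_all_ge_union_bound)
    show "prob {\<omega> \<in> space M. \<not> norm (e t \<omega>) \<le> r t} \<le> \<delta> / real T" if "t \<in> {1..T}" for t
      using traj_deviation_tail[OF M indep noise \<sigma>_pos L_pos lip \<epsilon> \<delta> T] that
      by (simp add: not_le e_def r_def)
  qed simp_all
  ultimately show ?thesis
    using T by (simp add: e_def r_def)
qed

theorem theorem2:
  fixes M :: "'a measure"
    and f :: "'n::euclidean_space \<Rightarrow> 'm::euclidean_space \<Rightarrow> nat \<Rightarrow> 'n"
    and L \<sigma> :: "nat \<Rightarrow> real"
    and w X :: "nat \<Rightarrow> 'a \<Rightarrow> 'n"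
    and x :: "nat \<Rightarrow> 'n"
    and d :: "nat \<Rightarrow> 'm"
    and X0 :: "'n set" and D :: "'m set"
    and x0 :: 'n and T :: nat and \<delta> \<epsilon> :: real
  assumes "prob_space M"
    and smooth: "\<And>t. smooth_map (\<lambda>(y, e). f y e t)"
    and L_pos: "\<And>t. L t > 0"
    and lip: "\<And>t y z e. norm (f y e t - f z e t) \<le> L t * norm (y - z)"
    and indep: "prob_space.indep_vars M (\<lambda>_. borel) w UNIV"
    and \<sigma>_pos: "\<And>t. \<sigma> t > 0"
    and noise: "\<And>t. subG M (w t) ((\<sigma> t)^2)"
    and T_pos: "T \<ge> 1"
    and x0: "x0 \<in> X0"
    and inputs: "\<And>t. t \<le> T \<Longrightarrow> d t \<in> D"
    and X_init: "\<And>\<omega>. \<omega> \<in> space M \<Longrightarrow> X 0 \<omega> = x0"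
    and X_step: "\<And>t \<omega>. t < T \<Longrightarrow> \<omega> \<in> space M \<Longrightarrow> X (Suc t) \<omega> = f (X t \<omega>) (d t) t + w t \<omega>"
    and x_init: "x 0 = x0"
    and x_step: "\<And>t. t < T \<Longrightarrow> x (Suc t) = f (x t) (d t) t"
    and \<delta>: "0 < \<delta>" "\<delta> \<le> 1"
    and \<epsilon>: "0 < \<epsilon>" "\<epsilon> < 1"
  shows "measure M {\<omega> \<in> space M. \<forall>t\<le>T. norm (X t \<omega> - x t) \<le> radius L \<sigma> DIM('n) \<epsilon> \<delta> T t}
           \<ge> 1 - \<delta>"
proof -
  define F where "F t y = f y (d t) t" for t y
  have "X t \<omega> = traj F x0 t (\<lambda>k. w k \<omega>)" if "t \<le> T" "\<omega> \<in> space M" for t \<omega>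
    using that(1) by (rule traj_eqI) (simp_all add: F_def X_init X_step that(2))
  moreover have "x t = traj F x0 t (\<lambda>_. 0)" if "t \<le> T" for t
    using that by (rule traj_eqI) (simp_all add: F_def x_init x_step)
  moreover have "1 - \<delta> \<le> measure M {\<omega> \<in> space M. \<forall>t\<le>T.
      norm (traj F x0 t (\<lambda>k. w k \<omega>) - traj F x0 t (\<lambda>_. 0)) \<le> radius L \<sigma> DIM('n) \<epsilon> \<delta> T t}"
    using \<open>prob_space M\<close> indep noise \<sigma>_pos L_pos lip \<epsilon> \<delta> T_pos unfolding F_def
    by (rule traj_deviation_within_radius)
  ultimately show ?thesis
    by (simp cong: conj_cong)
qed

end
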